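(* Let $H$ be a triangle-free graph (possibly with loops) on $n\geq 4$ vertices, let $t\ge 0$ and $c$ be integers with $c\geq 16(nt+n^3)$, let $\Psi$ be a suited $(c+t)$-coloring of $\mathcal{E}_c(H)$, and let $x=\sqrt[4]{(nt+n^3)c^3}$. Then there exists a vertex $v\in V(H)$ such that at least $c-x$ primary colors are $v$-robust (with respect to $\Psi$).
   Context: Graphs have no multiple edges but may have loops; triangle-free means there are no three distinct pairwise adjacent vertices. For integer $c\ge1$, maps $\phi_1,\phi_2:V(H)\to[c]$ are co-proper if $\phi_1(u)\ne\phi_2(v)$ whenever $u\sim v$ in $H$. The exponential graph $\mathcal{E}_c(H)$ has vertex set $[c]^{V(H)}$, with $\phi_1\sim\phi_2$ iff they are co-proper. A proper $(c+t)$-coloring $\Psi:V(\mathcal{E}_c(H))\to[c+t]$ gives adjacent maps different colors; colors $1,\dots,c$ are primary and $c+1,\dots,c+t$ secondary. $\Psi$ is suited if $\Psi(\phi)\in\operatorname{im}(\phi)\cup\{c+1,\dots,c+t\}$ for every $\phi$. Writing $\overline{N}(v)=\{v\}\cup N(v)$ for the closed neighborhood, a primary color $b\in[c]$ is $v$-robust if for every $\phi\in\Psi^{-1}(b)$ there is $w\in\overline{N}(v)$ with $\phi(w)=b$. *)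

theory Defs
  imports Complex_Main
begin

text \<open>Graph H: vertex set is the finite type 'a, adjacency E symmetric (loops allowed).\<close>

definition sym_graph :: "('a \<Rightarrow> 'a \<Rightarrow> bool) \<Rightarrow> bool" where
  "sym_graph E \<longleftrightarrow> (\<forall>u v. E u v \<longrightarrow> E v u)"

definition triangle_free :: "('a \<Rightarrow> 'a \<Rightarrow> bool) \<Rightarrow> bool" where
  "triangle_free E \<longleftrightarrow>
     \<not> (\<exists>u v w. u \<noteq> v \<and> v \<noteq> w \<and> u \<noteq> w \<and> E u v \<and> E v w \<and> E u w)"

text \<open>Vertices of the exponential graph: maps V(H) \<rightarrow> [c].\<close>
definition maps :: "nat \<Rightarrow> ('a \<Rightarrow> nat) set" where
  "maps c = {\<phi>. \<forall>v. \<phi> v \<in> {1..c}}"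

definition co_proper :: "('a \<Rightarrow> 'a \<Rightarrow> bool) \<Rightarrow> ('a \<Rightarrow> nat) \<Rightarrow> ('a \<Rightarrow> nat) \<Rightarrow> bool" where
  "co_proper E \<phi>1 \<phi>2 \<longleftrightarrow> (\<forall>u v. E u v \<longrightarrow> \<phi>1 u \<noteq> \<phi>2 v)"

definition proper_exp_coloring ::
  "('a \<Rightarrow> 'a \<Rightarrow> bool) \<Rightarrow> nat \<Rightarrow> nat \<Rightarrow> (('a \<Rightarrow> nat) \<Rightarrow> nat) \<Rightarrow> bool" where
  "proper_exp_coloring E c t \<Psi> \<longleftrightarrow>
     (\<forall>\<phi>\<in>maps c. \<Psi> \<phi> \<in> {1..c+t}) \<and>
     (\<forall>\<phi>1\<in>maps c. \<forall>\<phi>2\<in>maps c. co_proper E \<phi>1 \<phi>2 \<longrightarrow> \<Psi> \<phi>1 \<noteq> \<Psi> \<phi>2)"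

definition suited :: "nat \<Rightarrow> nat \<Rightarrow> (('a \<Rightarrow> nat) \<Rightarrow> nat) \<Rightarrow> bool" where
  "suited c t \<Psi> \<longleftrightarrow> (\<forall>\<phi>\<in>maps c. \<Psi> \<phi> \<in> range \<phi> \<union> {c+1..c+t})"

definition closed_nbhd :: "('a \<Rightarrow> 'a \<Rightarrow> bool) \<Rightarrow> 'a \<Rightarrow> 'a set" where
  "closed_nbhd E v = {v} \<union> {w. E v w}"

definition robust ::
  "('a \<Rightarrow> 'a \<Rightarrow> bool) \<Rightarrow> nat \<Rightarrow> (('a \<Rightarrow> nat) \<Rightarrow> nat) \<Rightarrow> 'a \<Rightarrow> nat \<Rightarrow> bool" where
  "robust E c \<Psi> v b \<longleftrightarrow> b \<in> {1..c} \<and>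
     (\<forall>\<phi>\<in>maps c. \<Psi> \<phi> = b \<longrightarrow> (\<exists>w\<in>closed_nbhd E v. \<phi> w = b))"

end

theory Submission
  imports Defs "HOL-Library.FuncSet"
begin

text \<open>Suppose every vertex v has more than A = n t + n^3 primary colours that are not v-robust; each
such colour b comes with a witness map of colour b that avoids b on the closed neighbourhood of v.
A union bound yields a map \<psi> choosing at each u a non-robust colour, outside any prescribed set of
at most n t colours, such that \<psi> is co-proper to the witness of (u, \<psi> u) for every u. Then
\<Psi> \<psi> differs from every value of \<psi>, so by suitedness it is secondary. Repeating this t + 1 times
with disjoint images gives t + 1 pairwise co-proper maps with distinct secondary colours, which is
impossible. Finally A \<le> (A c^3)^(1/4) already follows from A \<le> c.\<close>

lemma card_PiE_determined_coordinate_le: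
  fixes S :: "'a::finite \<Rightarrow> 'c set"
  assumes fin: "\<And>u. finite (S u)" and "u \<noteq> u'"
  shows "card {f \<in> PiE UNIV S. f u' = h (f u)} * card (S u') \<le> card (PiE UNIV S)"
proof -
  let ?D = "{f \<in> PiE UNIV S. f u' = h (f u)}"
  let ?upd = "\<lambda>(f, a). f(u' := a)"
  have "inj_on ?upd (?D \<times> S u')"
  proof (rule inj_onI, clarsimp)
    fix f a f' a'
    assume "f u' = h (f u)" "f' u' = h (f' u)" and eq: "f(u' := a) = f'(u' := a')"
    moreover have "f v = f' v" if "v \<noteq> u'" for v using eq that by (metis fun_upd_other)
    ultimately show "f = f' \<and> a = a'" using \<open>u \<noteq> u'\<close> eq by (metis ext fun_upd_same)
  qed
  moreover have "?upd ` (?D \<times> S u') \<subseteq> PiE UNIV S" by (auto simp: PiE_iff)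
  moreover have "finite (PiE UNIV S)" using fin by (simp add: finite_PiE)
  ultimately have "card (?D \<times> S u') \<le> card (PiE UNIV S)" by (rule card_inj_on_le)
  then show ?thesis by (simp add: card_cartesian_product)
qed

text \<open>Union bound: by the previous lemma each of the N constraints (u, u', w) excludes at most a
1 / card (S u') < 1 / N fraction of the choice functions.\<close>
lemma exists_choice_avoiding:
  fixes S :: "'a::finite \<Rightarrow> 'c set" and g :: "'a \<Rightarrow> 'c \<Rightarrow> 'b::finite \<Rightarrow> 'c"
  assumes fin: "\<And>u. finite (S u)"
    and big: "\<And>u. card (UNIV :: 'a set) * card (UNIV :: 'a set) * card (UNIV :: 'b set) < card (S u)"
  shows "\<exists>f. (\<forall>u. f u \<in> S u) \<and> (\<forall>u u' w. u \<noteq> u' \<longrightarrow> f u' \<noteq> g u (f u) w)"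
proof (rule ccontr)
  assume none: "\<not> ?thesis"
  define N where "N = card (UNIV :: 'a set) * card (UNIV :: 'a set) * card (UNIV :: 'b set)"
  define P where "P = PiE UNIV S"
  define Bad where "Bad = (\<lambda>(u, u', w). {f \<in> P. u \<noteq> u' \<and> f u' = g u (f u) w})"
  have finP: "finite P" using fin by (simp add: P_def finite_PiE)
  have "S u \<noteq> {}" for u using big[of u] by auto
  then have "P \<noteq> {}" by (simp add: P_def PiE_eq_empty_iff)
  then have P_pos: "0 < card P" using finP by (simp add: card_gt_0_iff)
  have "P \<subseteq> (\<Union>i. Bad i)"
    using none by (fastforce simp: P_def Bad_def PiE_iff)
  moreover have "finite (Bad i)" for i
    using finP by (auto simp: Bad_def split: prod.splits)
  ultimately have "card P \<le> card (\<Union>i. Bad i)" by (intro card_mono) auto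
  also have "\<dots> \<le> (\<Sum>i\<in>UNIV. card (Bad i))" by (rule card_UN_le) simp
  finally have "(N + 1) * card P \<le> (\<Sum>i\<in>UNIV. (N + 1) * card (Bad i))"
    by (metis mult_le_mono2 sum_distrib_left)
  also have "\<dots> \<le> (\<Sum>i\<in>(UNIV :: ('a \<times> 'a \<times> 'b) set). card P)"
  proof (rule sum_mono, clarify)
    fix u u' w
    show "(N + 1) * card (Bad (u, u', w)) \<le> card P"
    proof (cases "u = u'")
      case False
      have "card (Bad (u, u', w)) * card (S u') \<le> card P"
        using card_PiE_determined_coordinate_le[OF fin False, where h = "\<lambda>x. g u x w"] False
        by (simp add: Bad_def P_def)
      moreover have "N + 1 \<le> card (S u')" using big[of u'] by (simp add: N_def)
      ultimately show ?thesis by (metis le_trans mult.commute mult_le_mono2)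
    qed (simp add: Bad_def)
  qed
  also have "\<dots> = N * card P"
    by (simp add: N_def card_cartesian_product flip: UNIV_Times_UNIV)
  finally show False using P_pos by simp
qed

definition nonrobust :: "('a \<Rightarrow> 'a \<Rightarrow> bool) \<Rightarrow> nat \<Rightarrow> (('a \<Rightarrow> nat) \<Rightarrow> nat) \<Rightarrow> 'a \<Rightarrow> nat set"
  where "nonrobust E c \<Psi> v = {b \<in> {1..c}. \<not> robust E c \<Psi> v b}"

lemma card_nonrobust: "card (nonrobust E c \<Psi> v) = c - card {b. robust E c \<Psi> v b}"
proof -
  have "{b. robust E c \<Psi> v b} \<subseteq> {1..c}" by (auto simp: robust_def)
  moreover have "nonrobust E c \<Psi> v = {1..c} - {b. robust E c \<Psi> v b}"
    by (auto simp: nonrobust_def robust_def)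
  ultimately show ?thesis by (simp add: card_Diff_subset finite_subset)
qed

lemma nonrobust_witnesses:
  obtains W where "\<And>v b. b \<in> nonrobust E c \<Psi> v \<Longrightarrow>
    W v b \<in> maps c \<and> \<Psi> (W v b) = b \<and> (\<forall>w\<in>closed_nbhd E v. W v b w \<noteq> b)"
proof -
  define W where
    "W v b = (SOME \<phi>. \<phi> \<in> maps c \<and> \<Psi> \<phi> = b \<and> (\<forall>w\<in>closed_nbhd E v. \<phi> w \<noteq> b))" for v b
  have "W v b \<in> maps c \<and> \<Psi> (W v b) = b \<and> (\<forall>w\<in>closed_nbhd E v. W v b w \<noteq> b)"
    if "b \<in> nonrobust E c \<Psi> v" for v b
  proof -
    have "\<exists>\<phi>. \<phi> \<in> maps c \<and> \<Psi> \<phi> = b \<and> (\<forall>w\<in>closed_nbhd E v. \<phi> w \<noteq> b)"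
      using that by (auto simp: nonrobust_def robust_def)
    then show ?thesis unfolding W_def by (rule someI_ex)
  qed
  then show ?thesis by (rule that)
qed

lemma co_proper_if_disjoint_ranges: "range \<phi>\<^sub>1 \<inter> range \<phi>\<^sub>2 = {} \<Longrightarrow> co_proper E \<phi>\<^sub>1 \<phi>\<^sub>2"
  by (auto simp: co_proper_def)

lemma suited_color_secondary_if_avoids_witnesses:
  assumes proper: "proper_exp_coloring E c t \<Psi>" and suited: "suited c t \<Psi>"
    and W: "\<And>v b. b \<in> nonrobust E c \<Psi> v \<Longrightarrow>
      W v b \<in> maps c \<and> \<Psi> (W v b) = b \<and> (\<forall>w\<in>closed_nbhd E v. W v b w \<noteq> b)"
    and \<psi>_nonrobust: "\<And>u. \<psi> u \<in> nonrobust E c \<Psi> u"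
    and \<psi>_avoids: "\<And>u u' w. u \<noteq> u' \<Longrightarrow> \<psi> u' \<noteq> W u (\<psi> u) w"
  shows "\<Psi> \<psi> \<in> {c+1..c+t}"
proof -
  have \<psi>_map: "\<psi> \<in> maps c" using \<psi>_nonrobust by (auto simp: maps_def nonrobust_def)
  have "\<Psi> \<psi> \<noteq> \<psi> u" for u
  proof -
    have \<phi>: "W u (\<psi> u) \<in> maps c" "\<Psi> (W u (\<psi> u)) = \<psi> u"
      "\<forall>w\<in>closed_nbhd E u. W u (\<psi> u) w \<noteq> \<psi> u"
      using W[OF \<psi>_nonrobust] by auto
    have "co_proper E \<psi> (W u (\<psi> u))"
      unfolding co_proper_def
    proof (intro allI impI)
      fix u' w assume "E u' w"
      then show "\<psi> u' \<noteq> W u (\<psi> u) w"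
        using \<phi>(3) \<psi>_avoids by (cases "u' = u") (auto simp: closed_nbhd_def)
    qed
    then have "\<Psi> \<psi> \<noteq> \<Psi> (W u (\<psi> u))"
      using proper \<psi>_map \<phi>(1) unfolding proper_exp_coloring_def by blast
    then show ?thesis using \<phi>(2) by simp
  qed
  then show ?thesis using suited \<psi>_map by (fastforce simp: suited_def)
qed

lemma exists_secondary_map_avoiding:
  fixes E :: "'a::finite \<Rightarrow> 'a \<Rightarrow> bool"
  assumes "proper_exp_coloring E c t \<Psi>" and "suited c t \<Psi>" and "finite U"
    and big: "\<And>v. card U + card (UNIV :: 'a set) ^ 3 < card (nonrobust E c \<Psi> v)"
  shows "\<exists>\<psi>\<in>maps c. range \<psi> \<inter> U = {} \<and> \<Psi> \<psi> \<in> {c+1..c+t}"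
proof -
  obtain W where W: "\<And>v b. b \<in> nonrobust E c \<Psi> v \<Longrightarrow>
      W v b \<in> maps c \<and> \<Psi> (W v b) = b \<and> (\<forall>w\<in>closed_nbhd E v. W v b w \<noteq> b)"
    using nonrobust_witnesses[where E = E and c = c and \<Psi> = \<Psi>] by blast
  have "card (UNIV :: 'a set) ^ 3 < card (nonrobust E c \<Psi> u - U)" for u
    using big[of u] diff_card_le_card_Diff[OF \<open>finite U\<close>, of "nonrobust E c \<Psi> u"] by linarith
  then have "\<exists>\<psi>. (\<forall>u. \<psi> u \<in> nonrobust E c \<Psi> u - U) \<and>
      (\<forall>u u' w. u \<noteq> u' \<longrightarrow> \<psi> u' \<noteq> W u (\<psi> u) w)"
    by (intro exists_choice_avoiding) (simp_all add: nonrobust_def power3_eq_cube)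
  then obtain \<psi> where \<psi>: "\<And>u. \<psi> u \<in> nonrobust E c \<Psi> u - U"
    and \<psi>_avoids: "\<And>u u' w. u \<noteq> u' \<Longrightarrow> \<psi> u' \<noteq> W u (\<psi> u) w"
    by blast
  have "\<Psi> \<psi> \<in> {c+1..c+t}"
    using suited_color_secondary_if_avoids_witnesses[OF assms(1,2) W] \<psi> \<psi>_avoids by blast
  moreover have "\<psi> \<in> maps c" using \<psi> by (auto simp: maps_def nonrobust_def)
  ultimately show ?thesis using \<psi> by blast
qed

lemma exists_disjoint_secondary_maps:
  fixes E :: "'a::finite \<Rightarrow> 'a \<Rightarrow> bool"
  assumes "proper_exp_coloring E c t \<Psi>" and "suited c t \<Psi>"
    and big: "\<And>v. card (UNIV :: 'a set) * t + card (UNIV :: 'a set) ^ 3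
      < card (nonrobust E c \<Psi> v)"
    and "k \<le> t + 1"
  shows "\<exists>F. (\<forall>i<k. F i \<in> maps c \<and> \<Psi> (F i) \<in> {c+1..c+t}) \<and>
    (\<forall>i<k. \<forall>j<k. i \<noteq> j \<longrightarrow> range (F i) \<inter> range (F j) = {})"
  using \<open>k \<le> t + 1\<close>
proof (induction k)
  case (Suc k)
  then obtain F where F_secondary: "\<forall>i<k. F i \<in> maps c \<and> \<Psi> (F i) \<in> {c+1..c+t}"
    and F_disjoint: "\<forall>i<k. \<forall>j<k. i \<noteq> j \<longrightarrow> range (F i) \<inter> range (F j) = {}" by auto
  define U where "U = (\<Union>i<k. range (F i))"
  have "card U \<le> (\<Sum>i<k. card (range (F i)))" unfolding U_def by (rule card_UN_le) simp
  also have "\<dots> \<le> k * card (UNIV :: 'a set)"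
    using sum_mono[of "{..<k}" "\<lambda>i. card (range (F i))" "\<lambda>_. card (UNIV :: 'a set)"]
    by (simp add: card_image_le)
  also have "\<dots> \<le> card (UNIV :: 'a set) * t" using Suc.prems by simp
  finally have "card U + card (UNIV :: 'a set) ^ 3 < card (nonrobust E c \<Psi> v)" for v
    using big[of v] by linarith
  moreover have "finite U" by (simp add: U_def)
  ultimately obtain \<psi> where "\<psi> \<in> maps c" "range \<psi> \<inter> U = {}" "\<Psi> \<psi> \<in> {c+1..c+t}"
    using exists_secondary_map_avoiding[OF assms(1,2)] by blast
  define G where "G = F(k := \<psi>)"
  have "\<forall>i<Suc k. G i \<in> maps c \<and> \<Psi> (G i) \<in> {c+1..c+t}"
    using F_secondary \<open>\<psi> \<in> maps c\<close> \<open>\<Psi> \<psi> \<in> {c+1..c+t}\<close> by (simp add: G_def less_Suc_eq)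
  moreover have "\<forall>i<Suc k. \<forall>j<Suc k. i \<noteq> j \<longrightarrow> range (G i) \<inter> range (G j) = {}"
    using F_disjoint \<open>range \<psi> \<inter> U = {}\<close>
    by (auto simp: G_def less_Suc_eq U_def disjoint_iff) (metis lessThan_iff rangeI)
  ultimately show ?case by blast
qed simp

lemma card_pairwise_co_proper_secondary_le:
  assumes proper: "proper_exp_coloring E c t \<Psi>"
    and secondary: "\<forall>i<k. F i \<in> maps c \<and> \<Psi> (F i) \<in> {c+1..c+t}"
    and pairwise: "\<forall>i<k. \<forall>j<k. i \<noteq> j \<longrightarrow> co_proper E (F i) (F j)"
  shows "k \<le> t"
proof -
  have "inj_on (\<lambda>i. \<Psi> (F i)) {..<k}"
  proof (rule inj_onI, rule ccontr)
    fix i j assume "i \<in> {..<k}" "j \<in> {..<k}" "i \<noteq> j"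
    then have "co_proper E (F i) (F j)" "F i \<in> maps c" "F j \<in> maps c"
      using pairwise secondary by auto
    then have "\<Psi> (F i) \<noteq> \<Psi> (F j)" using proper by (simp add: proper_exp_coloring_def)
    moreover assume "\<Psi> (F i) = \<Psi> (F j)"
    ultimately show False by contradiction
  qed
  moreover have "(\<lambda>i. \<Psi> (F i)) ` {..<k} \<subseteq> {c+1..c+t}" using secondary by auto
  ultimately have "card {..<k} \<le> card {c+1..c+t}" by (rule card_inj_on_le) simp
  then show ?thesis by simp
qed

lemma le_root4_mult_cube:
  fixes A c :: real
  assumes "0 \<le> A" and "A \<le> c"
  shows "A \<le> root 4 (A * c ^ 3)"
proof -
  have "A ^ 3 \<le> c ^ 3" using assms by (simp add: power_mono)
  then have "A ^ 4 \<le> A * c ^ 3"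
    using mult_left_mono[OF _ \<open>0 \<le> A\<close>] by (simp add: power_numeral_reduce)
  then have "root 4 (A ^ 4) \<le> root 4 (A * c ^ 3)" by simp
  then show ?thesis using assms(1) by (simp add: real_root_power_cancel)
qed

theorem lemma5:
  fixes E :: "'a::finite \<Rightarrow> 'a \<Rightarrow> bool"
    and n c t :: nat and \<Psi> :: "('a \<Rightarrow> nat) \<Rightarrow> nat"
  assumes "sym_graph E" and "triangle_free E"
    and "card (UNIV :: 'a set) = n" and "n \<ge> 4"
    and "real c \<ge> 16 * (real n * real t + real n ^ 3)"
    and "proper_exp_coloring E c t \<Psi>" and "suited c t \<Psi>"
  shows "\<exists>v. real (card {b. robust E c \<Psi> v b})
             \<ge> real c - root 4 ((real n * real t + real n ^ 3) * real c ^ 3)"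
proof (rule ccontr)
  let ?A = "real n * real t + real n ^ 3"
  assume "\<not> ?thesis"
  then have few_robust:
      "real (card {b. robust E c \<Psi> v b}) < real c - root 4 (?A * real c ^ 3)" for v
    by (simp add: not_le)
  have "?A \<le> root 4 (?A * real c ^ 3)" using assms(5) by (intro le_root4_mult_cube) auto
  have many_nonrobust: "n * t + n ^ 3 < card (nonrobust E c \<Psi> v)" for v
  proof -
    have "real (n * t + n ^ 3) < real c - real (card {b. robust E c \<Psi> v b})"
      using few_robust[of v] \<open>?A \<le> _\<close> by simp
    then show ?thesis unfolding card_nonrobust by linarith
  qed
  obtain F where secondary: "\<forall>i<t+1. F i \<in> maps c \<and> \<Psi> (F i) \<in> {c+1..c+t}"
    and disjoint: "\<forall>i<t+1. \<forall>j<t+1. i \<noteq> j \<longrightarrow> range (F i) \<inter> range (F j) = {}"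
    using exists_disjoint_secondary_maps[OF assms(6,7), of "t+1"] many_nonrobust assms(3) by auto
  from disjoint have "\<forall>i<t+1. \<forall>j<t+1. i \<noteq> j \<longrightarrow> co_proper E (F i) (F j)"
    by (simp add: co_proper_if_disjoint_ranges)
  with secondary have "t + 1 \<le> t" by (rule card_pairwise_co_proper_secondary_le[OF assms(6)])
  then show False by simp
qed

end
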